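(* Let $(X,d)$ be a complete metric space and let $T\colon X\to X$ satisfy (CM2): for all $x,y\in X$, $x\neq y$ implies $d(Tx,Ty)<\frac{1}{2}\{d(x,Ty)+d(y,Tx)\}$. Then the following are equivalent: (i) for every $x\in X$ and every $\varepsilon>0$ there exists $\delta>0$ such that for all $i,j\in\mathbb{N}\cup\{0\}$, $\frac{1}{2}\{d(T^ix,T^{j+1}x)+d(T^jx,T^{i+1}x)\}<\varepsilon+\delta$ implies $d(T^{i+1}x,T^{j+1}x)\le\varepsilon$; (ii) $T$ has a unique fixed point $z\in X$ and the sequence $(T^nx)_{n}$ converges to $z$ for every $x\in X$.
   Context: $T^n$ denotes the $n$-fold composition of $T$, with $T^0$ the identity; $\mathbb{N}=\{1,2,3,\dots\}$. *)

theory Defs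
  imports "HOL-Analysis.Analysis"
begin

end

theory Submission
  imports Defs
begin

text \<open>
  For an orbit \<open>s\<close> of a map satisfying (CM2), the step lengths \<open>dist (s n) (s (Suc n))\<close>
  are strictly decreasing until they vanish. Condition (i) forbids a positive limit of these
  step lengths and, applied along the tail of the orbit, keeps every later point within
  about \<open>\<epsilon>\<close> of a point where the step length is tiny; hence the orbit is Cauchy, and by
  (CM2) its limit is a fixed point, necessarily the unique one.
  Conversely, if an orbit converges to the fixed point \<open>z\<close>, each point \<open>s i \<noteq> z\<close> has a
  uniform positive gap in (CM2) against all other orbit points (the gap against \<open>s j\<close> tends
  to the positive gap against \<open>z\<close>). Taking \<open>\<delta>\<close> below the gaps of the finitely many points
  \<open>s i \<noteq> z\<close> before the orbit enters the \<open>\<epsilon>/2\<close>-ball around \<open>z\<close> gives (i).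
\<close>

definition meir_keeler_seq :: "(nat \<Rightarrow> 'a::metric_space) \<Rightarrow> bool" where
  "meir_keeler_seq s \<longleftrightarrow> (\<forall>\<epsilon>>0. \<exists>\<delta>>0. \<forall>i j.
     (dist (s i) (s (Suc j)) + dist (s j) (s (Suc i))) / 2 < \<epsilon> + \<delta>
       \<longrightarrow> dist (s (Suc i)) (s (Suc j)) \<le> \<epsilon>)"

lemma pos_lower_bound_if_eventually_gt:
  fixes f :: "nat \<Rightarrow> real"
  assumes "\<And>j. f j > 0" "c > 0" "eventually (\<lambda>j. f j > c) sequentially"
  shows "\<exists>g>0. \<forall>j. g \<le> f j"
proof -
  obtain M where M: "\<And>j. j \<ge> M \<Longrightarrow> f j > c"
    using assms(3) by (auto simp: eventually_sequentially)
  define g where "g = Min (insert c (f ` {..<M}))"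
  have "g > 0" unfolding g_def using assms(1,2) by (subst Min_gr_iff) auto
  moreover have "g \<le> f j" for j
  proof (cases "j < M")
    case True then show ?thesis unfolding g_def by (intro Min_le) auto
  next
    case False
    moreover have "g \<le> c" unfolding g_def by (intro Min_le) auto
    ultimately show ?thesis using M[of j] by simp
  qed
  ultimately show ?thesis by blast
qed

locale cm2_map =
  fixes T :: "'a::metric_space \<Rightarrow> 'a"
  assumes cm2: "x \<noteq> y \<Longrightarrow> dist (T x) (T y) < (dist x (T y) + dist y (T x)) / 2"
begin

lemma dist_le: "dist (T x) (T y) \<le> (dist x (T y) + dist y (T x)) / 2"
  using cm2[of x y] by (cases "x = y") simp_all

lemma fixed_point_unique:
  assumes "T a = a" "T b = b"
  shows "a = b"
  using cm2[of a b] assms by (auto simp: dist_commute)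

lemma dist_step_le: "dist (T x) (T (T x)) \<le> dist x (T x)"
  using dist_le[of x "T x"] dist_triangle[of x "T (T x)" "T x"] by simp

lemma dist_step_less:
  assumes "T x \<noteq> x"
  shows "dist (T x) (T (T x)) < dist x (T x)"
  using cm2[of x "T x"] assms dist_triangle[of x "T (T x)" "T x"] by simp

lemma limit_of_orbit_is_fixed:
  assumes orbit: "\<And>n. s (Suc n) = T (s n)" and lim: "s \<longlonglongrightarrow> z"
  shows "T z = z"
proof -
  have lim_Suc: "(\<lambda>n. s (Suc n)) \<longlonglongrightarrow> z" using lim by (rule LIMSEQ_Suc)
  have "dist z (T z) \<le> (dist z (T z) + dist z z) / 2"
  proof (rule LIMSEQ_le)
    show "(\<lambda>n. dist (s (Suc n)) (T z)) \<longlonglongrightarrow> dist z (T z)"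
      by (intro tendsto_intros lim_Suc)
    show "(\<lambda>n. (dist (s n) (T z) + dist z (s (Suc n))) / 2)
            \<longlonglongrightarrow> (dist z (T z) + dist z z) / 2"
      by (intro tendsto_intros lim lim_Suc) simp
    show "\<exists>N. \<forall>n\<ge>N. dist (s (Suc n)) (T z) \<le> (dist (s n) (T z) + dist z (s (Suc n))) / 2"
      using dist_le orbit by metis
  qed
  then show ?thesis by simp
qed

lemma orbit_step_tendsto_0:
  assumes orbit: "\<And>n. s (Suc n) = T (s n)" and mk: "meir_keeler_seq s"
  shows "(\<lambda>n. dist (s n) (s (Suc n))) \<longlonglongrightarrow> 0"
proof -
  define d where "d n = dist (s n) (s (Suc n))" for n
  have "decseq d"
    using dist_step_le orbit by (intro decseq_SucI) (simp add: d_def)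
  then obtain r where lim: "d \<longlonglongrightarrow> r" and r_le: "\<forall>n. r \<le> d n"
    using decseq_convergent[of d 0] by (auto simp: d_def)
  have "r = 0"
  proof (rule ccontr)
    assume "r \<noteq> 0"
    moreover have "r \<ge> 0" using lim by (rule LIMSEQ_le_const) (simp add: d_def)
    ultimately have "r > 0" by simp
    then obtain \<delta> where "\<delta> > 0" and mk_r: "\<forall>i j.
        (dist (s i) (s (Suc j)) + dist (s j) (s (Suc i))) / 2 < r + \<delta>
          \<longrightarrow> dist (s (Suc i)) (s (Suc j)) \<le> r"
      using mk unfolding meir_keeler_seq_def by blast
    have "eventually (\<lambda>n. d n < r + \<delta>) sequentially"
      using lim \<open>\<delta> > 0\<close> by (intro order_tendstoD) auto
    then obtain M where M: "d M < r + \<delta>" by (auto simp: eventually_sequentially)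
    have "dist (s M) (s (Suc (Suc M))) \<le> d M + d (Suc M)"
      using dist_triangle[of "s M" "s (Suc (Suc M))" "s (Suc M)"] by (simp add: d_def)
    moreover have "d (Suc M) \<le> d M" using \<open>decseq d\<close> by (simp add: decseq_Suc_iff)
    ultimately have "dist (s M) (s (Suc (Suc M))) < 2 * r + 2 * \<delta>" using M by linarith
    then have "d (Suc M) \<le> r" using mk_r[rule_format, of M "Suc M"] by (simp add: d_def)
    moreover have "d (Suc (Suc M)) < d (Suc M)"
    proof -
      have "d (Suc M) > 0" using r_le \<open>r > 0\<close> by (meson less_le_trans)
      then have "T (s (Suc M)) \<noteq> s (Suc M)" by (auto simp: d_def orbit)
      then show ?thesis using dist_step_less by (simp add: d_def orbit)
    qed
    ultimately show False using r_le[rule_format, of "Suc (Suc M)"] by linarith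
  qed
  with lim show ?thesis by (simp add: d_def[abs_def])
qed

lemma orbit_tail_close:
  assumes orbit: "\<And>n. s (Suc n) = T (s n)"
    and mk: "\<And>i j. (dist (s i) (s (Suc j)) + dist (s j) (s (Suc i))) / 2 < \<epsilon> + \<delta>
               \<Longrightarrow> dist (s (Suc i)) (s (Suc j)) \<le> \<epsilon>"
    and step: "dist (s N) (s (Suc N)) < \<delta> / 4" and "\<epsilon> > 0" and "N \<le> m"
  shows "dist (s N) (s m) < \<epsilon> + \<delta> / 2"
  using \<open>N \<le> m\<close>
proof (induction m rule: dec_induct)
  case base
  have "\<delta> > 0" using step zero_le_dist[of "s N" "s (Suc N)"] by linarith
  with \<open>\<epsilon> > 0\<close> show ?case by simp
next
  case (step m)
  define D where "D = dist (s (Suc N)) (s (Suc m))"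
  define X where "X = dist (s N) (s (Suc m))"
  define Y where "Y = dist (s m) (s (Suc N))"
  have "D \<le> (X + Y) / 2"
    using dist_le[of "s N" "s m"] orbit by (simp add: D_def X_def Y_def)
  moreover have "X \<le> dist (s N) (s (Suc N)) + D"
    using dist_triangle[of "s N" "s (Suc m)" "s (Suc N)"] by (simp add: X_def D_def)
  moreover have "Y \<le> dist (s N) (s m) + dist (s N) (s (Suc N))"
    using dist_triangle[of "s m" "s (Suc N)" "s N"] by (simp add: Y_def dist_commute)
  ultimately have "X < \<epsilon> + \<delta> / 2"
  proof (cases "(X + Y) / 2 < \<epsilon> + \<delta>")
    case True
    then have "D \<le> \<epsilon>" using mk[of N m] by (simp add: D_def X_def Y_def)
    with \<open>X \<le> dist (s N) (s (Suc N)) + D\<close> show ?thesis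
      using \<open>dist (s N) (s (Suc N)) < \<delta> / 4\<close> zero_le_dist[of "s N" "s (Suc N)"] by linarith
  next
    case False
    \<comment> \<open>impossible: \<open>X \<le> 2 dist (s N) (s (Suc N)) + Y\<close> is too small to reach \<open>2\<epsilon> + 2\<delta> - Y\<close>\<close>
    with step.IH \<open>dist (s N) (s (Suc N)) < \<delta> / 4\<close> show ?thesis
      using \<open>D \<le> (X + Y) / 2\<close> \<open>X \<le> dist (s N) (s (Suc N)) + D\<close>
        \<open>Y \<le> dist (s N) (s m) + dist (s N) (s (Suc N))\<close> by argo
  qed
  then show ?case by (simp add: X_def)
qed

lemma Cauchy_orbit:
  assumes orbit: "\<And>n. s (Suc n) = T (s n)" and mk: "meir_keeler_seq s"
  shows "Cauchy s"
proof (rule metric_CauchyI)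
  fix e :: real assume "e > 0"
  then have "e / 4 > 0" by simp
  then obtain \<delta> where "\<delta> > 0" and mk_e: "\<forall>i j.
      (dist (s i) (s (Suc j)) + dist (s j) (s (Suc i))) / 2 < e / 4 + \<delta>
        \<longrightarrow> dist (s (Suc i)) (s (Suc j)) \<le> e / 4"
    using mk unfolding meir_keeler_seq_def by blast
  define \<delta>' where "\<delta>' = min \<delta> (e / 4)"
  have "\<delta>' \<le> e / 4" by (simp add: \<delta>'_def)
  have "\<delta>' > 0" using \<open>\<delta> > 0\<close> \<open>e > 0\<close> by (simp add: \<delta>'_def)
  then have "eventually (\<lambda>n. dist (s n) (s (Suc n)) < \<delta>' / 4) sequentially"
    using orbit_step_tendsto_0[OF orbit mk] by (intro order_tendstoD) auto
  then obtain N where N: "dist (s N) (s (Suc N)) < \<delta>' / 4"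
    by (auto simp: eventually_sequentially)
  have close: "dist (s N) (s m) < e / 4 + \<delta>' / 2" if "N \<le> m" for m
    using mk_e \<open>e > 0\<close> that
    by (intro orbit_tail_close[OF orbit _ N]) (auto simp: \<delta>'_def)
  have "dist (s m) (s n) < e" if "N \<le> m" "N \<le> n" for m n
    using dist_triangle3[of "s m" "s n" "s N"] close[OF that(1)] close[OF that(2)]
      \<open>e > 0\<close> \<open>\<delta>' \<le> e / 4\<close> by argo
  then show "\<exists>M. \<forall>m\<ge>M. \<forall>n\<ge>M. dist (s m) (s n) < e" by blast
qed

lemma orbit_gap_pos:
  assumes orbit: "\<And>n. s (Suc n) = T (s n)" and lim: "s \<longlonglongrightarrow> z" and fixed: "T z = z"
    and "s i \<noteq> z"
  shows "\<exists>g>0. \<forall>j. dist (s (Suc i)) (s (Suc j)) + g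
                      \<le> (dist (s i) (s (Suc j)) + dist (s j) (s (Suc i))) / 2"
proof -
  define G where "G j = (dist (s i) (s (Suc j)) + dist (s j) (s (Suc i))) / 2
                         - dist (s (Suc i)) (s (Suc j))" for j
  have G_pos: "G j > 0" for j
  proof (cases "s i = s j")
    case True
    have "T (s i) \<noteq> s i" using fixed_point_unique[OF _ fixed] \<open>s i \<noteq> z\<close> by blast
    with True show ?thesis by (simp add: G_def orbit)
  next
    case False
    then show ?thesis using cm2 by (simp add: G_def orbit)
  qed
  define gap where "gap = (dist (s i) z + dist z (s (Suc i))) / 2 - dist (s (Suc i)) z"
  have "gap > 0" using cm2[OF \<open>s i \<noteq> z\<close>] fixed by (simp add: gap_def orbit)
  have "G \<longlonglongrightarrow> gap"
    unfolding G_def[abs_def] gap_def using lim LIMSEQ_Suc[OF lim] by (intro tendsto_intros) simp_all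
  then have "eventually (\<lambda>j. G j > gap / 2) sequentially"
    using \<open>gap > 0\<close> by (intro order_tendstoD) auto
  then obtain g where "g > 0" "\<forall>j. g \<le> G j"
    using pos_lower_bound_if_eventually_gt[of G "gap / 2"] G_pos \<open>gap > 0\<close> by auto
  then show ?thesis unfolding G_def by (metis add.commute le_diff_eq)
qed

lemma meir_keeler_seq_if_tendsto_fixed:
  assumes orbit: "\<And>n. s (Suc n) = T (s n)" and lim: "s \<longlonglongrightarrow> z" and fixed: "T z = z"
  shows "meir_keeler_seq s"
  unfolding meir_keeler_seq_def
proof (intro allI impI)
  fix \<epsilon> :: real assume "\<epsilon> > 0"
  define A where "A i j = (dist (s i) (s (Suc j)) + dist (s j) (s (Suc i))) / 2" for i j
  define D where "D i j = dist (s (Suc i)) (s (Suc j))" for i j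
  have A_D_sym: "A i j = A j i" "D i j = D j i" for i j
    by (simp_all add: A_def D_def dist_commute add.commute)
  have "\<forall>i. \<exists>g. s i \<noteq> z \<longrightarrow> g > 0 \<and> (\<forall>j. D i j + g \<le> A i j)"
    using orbit_gap_pos[OF orbit lim fixed] unfolding A_def D_def by blast
  then obtain \<gamma> where \<gamma>: "\<And>i j. s i \<noteq> z \<Longrightarrow> \<gamma> i > 0 \<and> D i j + \<gamma> i \<le> A i j"
    by metis
  obtain N where N: "\<And>n. n \<ge> N \<Longrightarrow> dist (s n) z < \<epsilon> / 2"
    using lim \<open>\<epsilon> > 0\<close> unfolding tendsto_iff eventually_sequentially by (meson half_gt_zero)
  define K where "K = {k. k < N \<and> s k \<noteq> z}"
  define \<delta> where "\<delta> = Min (insert 1 (\<gamma> ` K))"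
  have "finite K" by (simp add: K_def)
  then have "\<delta> > 0" unfolding \<delta>_def using \<gamma> by (subst Min_gr_iff) (auto simp: K_def)
  have \<delta>_le: "\<delta> \<le> \<gamma> k" if "k \<in> K" for k
    unfolding \<delta>_def using \<open>finite K\<close> that by (intro Min_le) auto
  have near: "k \<in> K \<or> dist (s (Suc k)) z < \<epsilon> / 2" for k
    using N[of "Suc k"] \<open>\<epsilon> > 0\<close> fixed orbit[of k] by (cases "k < N") (auto simp: K_def)
  have "D i j \<le> \<epsilon>" if "A i j < \<epsilon> + \<delta>" for i j
  proof -
    consider "i \<in> K" | "j \<in> K" | "dist (s (Suc i)) z < \<epsilon> / 2" "dist (s (Suc j)) z < \<epsilon> / 2"
      using near by blast
    then show ?thesis
    proof cases
      case 1
      then show ?thesis using \<gamma>[of i j] \<delta>_le[of i] that by (auto simp: K_def)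
    next
      case 2
      then show ?thesis using \<gamma>[of j i] \<delta>_le[of j] that A_D_sym by (auto simp: K_def)
    next
      case 3
      then show ?thesis using dist_triangle2[of "s (Suc i)" "s (Suc j)" z] by (simp add: D_def)
    qed
  qed
  with \<open>\<delta> > 0\<close> show "\<exists>\<delta>>0. \<forall>i j. (dist (s i) (s (Suc j)) + dist (s j) (s (Suc i))) / 2 < \<epsilon> + \<delta>
                            \<longrightarrow> dist (s (Suc i)) (s (Suc j)) \<le> \<epsilon>"
    unfolding A_def D_def by blast
qed

end

lemma orbits_tendsto_fixed_point:
  fixes T :: "'a::complete_space \<Rightarrow> 'a"
  assumes "cm2_map T" and mk: "\<And>x. meir_keeler_seq (\<lambda>n. (T ^^ n) x)"
  shows "\<exists>z. T z = z \<and> (\<forall>x. (\<lambda>n. (T ^^ n) x) \<longlonglongrightarrow> z)"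
proof -
  interpret cm2_map T by fact
  have tendsto_fixed: "\<exists>z. T z = z \<and> (\<lambda>n. (T ^^ n) x) \<longlonglongrightarrow> z" for x
  proof -
    have "Cauchy (\<lambda>n. (T ^^ n) x)" by (rule Cauchy_orbit) (simp_all add: mk)
    then obtain z where lim: "(\<lambda>n. (T ^^ n) x) \<longlonglongrightarrow> z"
      using Cauchy_convergent unfolding convergent_def by blast
    have "T z = z" by (rule limit_of_orbit_is_fixed[OF _ lim]) simp
    with lim show ?thesis by blast
  qed
  then obtain z where z: "T z = z" by blast
  have "(\<lambda>n. (T ^^ n) x) \<longlonglongrightarrow> z" for x
    using tendsto_fixed[of x] fixed_point_unique[OF _ z] by blast
  with z show ?thesis by blast
qed

theorem theorem4p2:
  fixes T :: "'a::complete_space \<Rightarrow> 'a"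
  assumes CM2: "\<And>x y. x \<noteq> y \<Longrightarrow>
      dist (T x) (T y) < (dist x (T y) + dist y (T x)) / 2"
  shows "(\<forall>x. \<forall>\<epsilon>>0. \<exists>\<delta>>0. \<forall>i j :: nat.
            (dist ((T ^^ i) x) ((T ^^ (j+1)) x) + dist ((T ^^ j) x) ((T ^^ (i+1)) x)) / 2 < \<epsilon> + \<delta>
            \<longrightarrow> dist ((T ^^ (i+1)) x) ((T ^^ (j+1)) x) \<le> \<epsilon>)
     \<longleftrightarrow>
         ((\<exists>!z. T z = z) \<and>
          (\<exists>z. T z = z \<and> (\<forall>x. (\<lambda>n. (T ^^ n) x) \<longlonglongrightarrow> z)))"
proof -
  interpret cm2_map T using CM2 by unfold_locales
  have "(\<forall>x. meir_keeler_seq (\<lambda>n. (T ^^ n) x))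
        \<longleftrightarrow> (\<exists>!z. T z = z) \<and> (\<exists>z. T z = z \<and> (\<forall>x. (\<lambda>n. (T ^^ n) x) \<longlonglongrightarrow> z))"
  proof
    assume "\<forall>x. meir_keeler_seq (\<lambda>n. (T ^^ n) x)"
    then show "(\<exists>!z. T z = z) \<and> (\<exists>z. T z = z \<and> (\<forall>x. (\<lambda>n. (T ^^ n) x) \<longlonglongrightarrow> z))"
      using orbits_tendsto_fixed_point[OF cm2_map_axioms] fixed_point_unique by blast
  next
    assume "(\<exists>!z. T z = z) \<and> (\<exists>z. T z = z \<and> (\<forall>x. (\<lambda>n. (T ^^ n) x) \<longlonglongrightarrow> z))"
    then obtain z where z: "T z = z" and lim: "\<And>x. (\<lambda>n. (T ^^ n) x) \<longlonglongrightarrow> z" by blast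
    show "\<forall>x. meir_keeler_seq (\<lambda>n. (T ^^ n) x)"
      by (intro allI meir_keeler_seq_if_tendsto_fixed[OF _ lim z]) simp
  qed
  then show ?thesis unfolding meir_keeler_seq_def Suc_eq_plus1 .
qed

end
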